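(* Consider the setting and Batching SVRG algorithm described in the context, with step sizes $\sigma_\theta = \frac{\lambda_{\min}}{6\kappa(Q)^2 L_G^2}$ and $\sigma_\omega = \beta\sigma_\theta$, where $\beta = \frac{8\lambda_{\max}(\hat A^\top \hat C^{-1}\hat A)}{\lambda_{\min}(\hat C)}$, and number of inner iterations $K = \frac{2}{\sigma_\theta\lambda_{\min}} = \frac{12\kappa(Q)^2L_G^2}{\lambda_{\min}^2}$. Assume $\hat A$ is nonsingular and $\hat C$ is positive definite. Then for every epoch $m$, $$\mathbb{E}\|Q^{-1}\Delta_{m+1}\|^2 \le \frac{2}{3}\,\mathbb{E}\|Q^{-1}\Delta_m\|^2 + 2\,\frac{1-\sigma_\theta\lambda_{\min}}{\lambda_{\min}^2}\,\mathbb{E}\|Q^{-1}e_m\|^2 .$$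
   Context: Data: $n$ transitions $(s_t,a_t,r_t,s_{t+1})$, $t\in[n]=\{1,\dots,n\}$, a feature map $\phi$ from states to $\mathbb{R}^d$ and a discount factor $\gamma$. Define $\hat A_t=\phi(s_t)(\phi(s_t)-\gamma\phi(s_{t+1}))^\top$, $\hat b_t=r_t\phi(s_t)$, $\hat C_t=\phi(s_t)\phi(s_t)^\top$, and let $\hat A,\hat b,\hat C$ be their averages over $t\in[n]$. Under the assumption that $\hat A$ is nonsingular and $\hat C$ positive definite, the saddle-point problem $\min_\theta\max_\omega \langle \hat b-\hat A\theta,\omega\rangle-\frac12\omega^\top\hat C\omega$ (equivalent to minimizing the empirical MSPBE $\frac12\|\hat A\theta-\hat b\|^2_{\hat C^{-1}}$) has the unique solution $(\theta^\star,\omega^\star)=(\hat A^{-1}\hat b,0)$. Let $\beta=\frac{8\lambda_{\max}(\hat A^\top\hat C^{-1}\hat A)}{\lambda_{\min}(\hat C)}$. For $t\in[n]$ set $G_t=\begin{pmatrix}0&-\sqrt\beta\hat A_t^\top\\ \sqrt\beta\hat A_t&\beta\hat C_t\end{pmatrix}$, $g_t=\begin{pmatrix}0\\ \sqrt\beta\hat b_t\end{pmatrix}$, and let $G=\frac1n\sum_t G_t$, $g=\frac1n\sum_t g_t$. Put $z^\star=(\theta^\star,\omega^\star/\sqrt\beta)$; then $Gz^\star=g$. With this $\beta$, $G$ is diagonalizable with all eigenvalues real and positive; fix a factorization $G=Q\Lambda Q^{-1}$ with $\Lambda$ diagonal. $\lambda_{\min}$ denotes the smallest eigenvalue of $G$;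 $\|\cdot\|$ is the Euclidean norm for vectors and the spectral norm for matrices; $\kappa(Q)=\|Q\|\|Q^{-1}\|$; $L_G^2=\left\|\frac1n\sum_{t=1}^n G_t^\top G_t\right\|$. Batching SVRG (written in the coordinates $z=(\theta,\omega/\sqrt\beta)$, with step sizes $\sigma_\theta$ for $\theta$ and $\sigma_\omega=\beta\sigma_\theta$ for $\omega$): at the start of epoch $m$ the current iterate is $z_m$. A subset $\mathcal B_m\subseteq[n]$ of size $B_m$ is sampled uniformly at random, and $G_m=\frac1{B_m}\sum_{t\in\mathcal B_m}G_t$, $g_m=\frac1{B_m}\sum_{t\in\mathcal B_m}g_t$. Set $z_{m,0}=z_m$ and for $j=0,\dots,K-1$ sample $t_j$ uniformly from $[n]$ (independently of everything else) and set $z_{m,j+1}=z_{m,j}-\sigma_\theta\big(G_{t_j}z_{m,j}+(G_m-G_{t_j})z_m-g_m\big)$; then $z_{m+1}=z_{m,K}$. Define $\Delta_m=z_m-z^\star$ and the mini-batch error $e_m=(Gz_m-g)-(G_mz_m-g_m)$. Expectations are over all randomness of the algorithm. *)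

theory Defs
  imports "HOL-Probability.Probability"
begin

definition outer :: "real^'n \<Rightarrow> real^'m \<Rightarrow> real^'m^'n" where
  "outer x y = (\<chi> i j. x$i * y$j)"

definition avg :: "nat \<Rightarrow> (nat \<Rightarrow> 'a::real_vector) \<Rightarrow> 'a" where
  "avg n f = (1 / real n) *\<^sub>R (\<Sum>t\<in>{1..n}. f t)"

definition bavg :: "nat set \<Rightarrow> (nat \<Rightarrow> 'a::real_vector) \<Rightarrow> 'a" where
  "bavg S f = (1 / real (card S)) *\<^sub>R (\<Sum>t\<in>S. f t)"

definition At :: "('s \<Rightarrow> real^'d) \<Rightarrow> (nat \<Rightarrow> 's) \<Rightarrow> real \<Rightarrow> nat \<Rightarrow> real^'d^'d" where
  "At \<phi> s \<gamma> t = outer (\<phi> (s t)) (\<phi> (s t) - \<gamma> *\<^sub>R \<phi> (s (Suc t)))"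

definition bt :: "('s \<Rightarrow> real^'d) \<Rightarrow> (nat \<Rightarrow> 's) \<Rightarrow> (nat \<Rightarrow> real) \<Rightarrow> nat \<Rightarrow> real^'d" where
  "bt \<phi> s r t = r t *\<^sub>R \<phi> (s t)"

definition Ct :: "('s \<Rightarrow> real^'d) \<Rightarrow> (nat \<Rightarrow> 's) \<Rightarrow> nat \<Rightarrow> real^'d^'d" where
  "Ct \<phi> s t = outer (\<phi> (s t)) (\<phi> (s t))"

definition real_eigenvalues :: "real^'n^'n \<Rightarrow> real set" where
  "real_eigenvalues M = {l. \<exists>v. v \<noteq> 0 \<and> M *v v = l *\<^sub>R v}"

definition lam_max :: "real^'n^'n \<Rightarrow> real" where
  "lam_max M = Max (real_eigenvalues M)"

definition lam_min :: "real^'n^'n \<Rightarrow> real" where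
  "lam_min M = Min (real_eigenvalues M)"

definition pos_def :: "real^'n^'n \<Rightarrow> bool" where
  "pos_def M \<longleftrightarrow> transpose M = M \<and> (\<forall>v. v \<noteq> 0 \<longrightarrow> v \<bullet> (M *v v) > 0)"

definition diagonal_mat :: "real^'n^'n \<Rightarrow> bool" where
  "diagonal_mat M \<longleftrightarrow> (\<forall>i j. i \<noteq> j \<longrightarrow> M $ i $ j = 0)"

definition spec_norm :: "real^'n^'m \<Rightarrow> real" where
  "spec_norm M = onorm (\<lambda>x. M *v x)"

text \<open>Block matrix [[0, -sqrt b A^T],[sqrt b A, b C]] and block vector (x,y).\<close>
definition bmat :: "real \<Rightarrow> real^'d^'d \<Rightarrow> real^'d^'d \<Rightarrow> real^('d+'d)^('d+'d)" where
  "bmat \<beta> A C = (\<chi> i j. (case i of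
       Inl a \<Rightarrow> (case j of Inl b \<Rightarrow> 0 | Inr b \<Rightarrow> - sqrt \<beta> * A$b$a)
     | Inr a \<Rightarrow> (case j of Inl b \<Rightarrow> sqrt \<beta> * A$a$b | Inr b \<Rightarrow> \<beta> * C$a$b)))"

definition bvec :: "real^'d \<Rightarrow> real^'d \<Rightarrow> real^('d+'d)" where
  "bvec x y = (\<chi> i. (case i of Inl a \<Rightarrow> x$a | Inr a \<Rightarrow> y$a))"

definition batch_pmf :: "nat \<Rightarrow> nat \<Rightarrow> nat set pmf" where
  "batch_pmf n b = pmf_of_set {S. S \<subseteq> {1..n} \<and> card S = b}"

primrec inner_dist :: "(nat \<Rightarrow> real^'k^'k) \<Rightarrow> nat \<Rightarrow> real \<Rightarrow> real^'k^'k \<Rightarrow> real^'k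
     \<Rightarrow> real^'k \<Rightarrow> nat \<Rightarrow> (real^'k) pmf" where
  "inner_dist Gs n \<sigma> Gm gm zm 0 = return_pmf zm"
| "inner_dist Gs n \<sigma> Gm gm zm (Suc j) =
     bind_pmf (inner_dist Gs n \<sigma> Gm gm zm j)
       (\<lambda>w. map_pmf (\<lambda>t. w - \<sigma> *\<^sub>R (Gs t *v w + (Gm - Gs t) *v zm - gm)) (pmf_of_set {1..n}))"

text \<open>Distribution of the epoch iterate z_m of Batching SVRG started at z0, batch sizes B.\<close>
primrec epoch_dist :: "(nat \<Rightarrow> real^'k^'k) \<Rightarrow> (nat \<Rightarrow> real^'k) \<Rightarrow> nat \<Rightarrow> real \<Rightarrow> nat
     \<Rightarrow> (nat \<Rightarrow> nat) \<Rightarrow> real^'k \<Rightarrow> nat \<Rightarrow> (real^'k) pmf" where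
  "epoch_dist Gs gs n \<sigma> K B z0 0 = return_pmf z0"
| "epoch_dist Gs gs n \<sigma> K B z0 (Suc m) =
     bind_pmf (epoch_dist Gs gs n \<sigma> K B z0 m) (\<lambda>z.
       bind_pmf (batch_pmf n (B m)) (\<lambda>S. inner_dist Gs n \<sigma> (bavg S Gs) (bavg S gs) z K))"

text \<open>Distribution of the mini-batch error e_m = (G z_m - g) - (G_m z_m - g_m).\<close>
definition err_dist :: "(nat \<Rightarrow> real^'k^'k) \<Rightarrow> (nat \<Rightarrow> real^'k) \<Rightarrow> nat \<Rightarrow> real \<Rightarrow> nat
     \<Rightarrow> (nat \<Rightarrow> nat) \<Rightarrow> real^'k \<Rightarrow> nat \<Rightarrow> (real^'k) pmf" where
  "err_dist Gs gs n \<sigma> K B z0 m =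
     bind_pmf (epoch_dist Gs gs n \<sigma> K B z0 m) (\<lambda>z.
       map_pmf (\<lambda>S. (avg n Gs *v z - avg n gs) - (bavg S Gs *v z - bavg S gs)) (batch_pmf n (B m)))"


definition Ahat :: "('s \<Rightarrow> real^'d) \<Rightarrow> (nat \<Rightarrow> 's) \<Rightarrow> real \<Rightarrow> nat \<Rightarrow> real^'d^'d" where
  "Ahat \<phi> s \<gamma> n = avg n (At \<phi> s \<gamma>)"

definition bhat :: "('s \<Rightarrow> real^'d) \<Rightarrow> (nat \<Rightarrow> 's) \<Rightarrow> (nat \<Rightarrow> real) \<Rightarrow> nat \<Rightarrow> real^'d" where
  "bhat \<phi> s r n = avg n (bt \<phi> s r)"

definition Chat :: "('s \<Rightarrow> real^'d) \<Rightarrow> (nat \<Rightarrow> 's) \<Rightarrow> nat \<Rightarrow> real^'d^'d" where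
  "Chat \<phi> s n = avg n (Ct \<phi> s)"

definition beta :: "('s \<Rightarrow> real^'d) \<Rightarrow> (nat \<Rightarrow> 's) \<Rightarrow> real \<Rightarrow> nat \<Rightarrow> real" where
  "beta \<phi> s \<gamma> n = 8 * lam_max (transpose (Ahat \<phi> s \<gamma> n) ** matrix_inv (Chat \<phi> s n) ** Ahat \<phi> s \<gamma> n)
                    / lam_min (Chat \<phi> s n)"

definition Gt :: "('s \<Rightarrow> real^'d) \<Rightarrow> (nat \<Rightarrow> 's) \<Rightarrow> real \<Rightarrow> nat \<Rightarrow> nat \<Rightarrow> real^('d+'d)^('d+'d)" where
  "Gt \<phi> s \<gamma> n t = bmat (beta \<phi> s \<gamma> n) (At \<phi> s \<gamma> t) (Ct \<phi> s t)"

definition gt :: "('s \<Rightarrow> real^'d) \<Rightarrow> (nat \<Rightarrow> 's) \<Rightarrow> (nat \<Rightarrow> real) \<Rightarrow> real \<Rightarrow> nat \<Rightarrow> nat \<Rightarrow> real^('d+'d)" where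
  "gt \<phi> s r \<gamma> n t = bvec 0 (sqrt (beta \<phi> s \<gamma> n) *\<^sub>R bt \<phi> s r t)"

definition Gbar :: "('s \<Rightarrow> real^'d) \<Rightarrow> (nat \<Rightarrow> 's) \<Rightarrow> real \<Rightarrow> nat \<Rightarrow> real^('d+'d)^('d+'d)" where
  "Gbar \<phi> s \<gamma> n = avg n (Gt \<phi> s \<gamma> n)"

text \<open>z* = (theta*, omega*/sqrt beta) with theta* = Ahat^-1 bhat, omega* = 0.\<close>
definition zstar :: "('s \<Rightarrow> real^'d) \<Rightarrow> (nat \<Rightarrow> 's) \<Rightarrow> (nat \<Rightarrow> real) \<Rightarrow> real \<Rightarrow> nat \<Rightarrow> real^('d+'d)" where
  "zstar \<phi> s r \<gamma> n = bvec (matrix_inv (Ahat \<phi> s \<gamma> n) *v bhat \<phi> s r n) 0"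

definition lminG :: "('s \<Rightarrow> real^'d) \<Rightarrow> (nat \<Rightarrow> 's) \<Rightarrow> real \<Rightarrow> nat \<Rightarrow> real" where
  "lminG \<phi> s \<gamma> n = lam_min (Gbar \<phi> s \<gamma> n)"

definition kappa :: "real^'k^'k \<Rightarrow> real" where
  "kappa Q = spec_norm Q * spec_norm (matrix_inv Q)"

definition LG2 :: "('s \<Rightarrow> real^'d) \<Rightarrow> (nat \<Rightarrow> 's) \<Rightarrow> real \<Rightarrow> nat \<Rightarrow> real" where
  "LG2 \<phi> s \<gamma> n = spec_norm (avg n (\<lambda>t. transpose (Gt \<phi> s \<gamma> n t) ** Gt \<phi> s \<gamma> n t))"

definition sigma_theta :: "('s \<Rightarrow> real^'d) \<Rightarrow> (nat \<Rightarrow> 's) \<Rightarrow> real \<Rightarrow> nat \<Rightarrow> real^('d+'d)^('d+'d) \<Rightarrow> real" where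
  "sigma_theta \<phi> s \<gamma> n Q = lminG \<phi> s \<gamma> n / (6 * (kappa Q)\<^sup>2 * LG2 \<phi> s \<gamma> n)"

end

theory Submission
  imports Defs
begin

text \<open>
  In the eigenbasis of G, i.e. for the error x = Q^-1 (z - z*), one inner step of SVRG is a
  contraction in mean square. Averaged over the sampled index it maps x to
  (I - sigma Lambda) x plus sigma times the transformed mini-batch error, which contracts by
  1 - sigma lambda_min; its variance is at most (sigma lambda_min / 6) |x - x_m|^2 by the choice
  of sigma, which is where L_G^2 and kappa(Q) enter. Young's inequality with
  eta = 3/4 sigma lambda_min gives E |x_(j+1)|^2 <= rho |x_j|^2 + c with
  1 - rho >= 11/12 sigma lambda_min, so after K = 2 / (sigma lambda_min) steps
  rho^K <= exp (-11/6) < 72/325, and summing the geometric series yields the constants 2/3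
  and 2 (1 - sigma lambda_min) / lambda_min^2.
\<close>

lemma matrix_mul_matrix_inv:
  fixes A :: "real^'n^'n"
  assumes "invertible A"
  shows "A ** matrix_inv A = mat 1" "matrix_inv A ** A = mat 1"
  using someI_ex[OF assms[unfolded invertible_def]] unfolding matrix_inv_def by auto

lemma not_invertible_zero: "\<not> invertible (0 :: real^'n^'n)"
proof
  assume "invertible (0 :: real^'n^'n)"
  then have "(mat 1 :: real^'n^'n) = 0" unfolding invertible_def by auto
  then have "(mat 1 :: real^'n^'n) $ undefined $ undefined = 0" by simp
  then show False by (simp add: mat_def)
qed

lemma inner_mv_transpose: "(M *v u) \<bullet> w = u \<bullet> (transpose M *v (w::real^'m))"
proof -
  have "u \<bullet> (transpose M *v w) = (w v* M) \<bullet> u" by (simp add: inner_commute)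
  also have "\<dots> = w \<bullet> (M *v u)" by (simp add: dot_lmul_matrix)
  finally show ?thesis by (simp add: inner_commute)
qed

lemma norm_mv_le_spec_norm: "norm (M *v x) \<le> spec_norm M * norm x"
  unfolding spec_norm_def by (rule onorm[OF matrix_vector_mul_bounded_linear])

lemma spec_norm_nonneg: "0 \<le> spec_norm M"
  unfolding spec_norm_def by (rule onorm_pos_le[OF matrix_vector_mul_bounded_linear])

lemma power2_norm_mv_le: "(norm (M *v x))\<^sup>2 \<le> (spec_norm M)\<^sup>2 * (norm x)\<^sup>2"
  using power_mono[OF norm_mv_le_spec_norm norm_ge_zero, of M x 2] by (simp add: power_mult_distrib)

lemma spec_norm_mult_ge_one:
  fixes Q P :: "real^'k^'k"
  assumes "Q ** P = mat 1"
  shows "1 \<le> spec_norm Q * spec_norm P"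
proof -
  define u where "u = axis (undefined::'k) (1::real)"
  have nu: "norm u = 1" unfolding u_def by simp
  have "1 = norm (Q *v (P *v u))" using nu by (simp add: matrix_vector_mul_assoc assms)
  also have "\<dots> \<le> spec_norm Q * norm (P *v u)" by (rule norm_mv_le_spec_norm)
  also have "\<dots> \<le> spec_norm Q * (spec_norm P * norm u)"
    by (intro mult_left_mono norm_mv_le_spec_norm spec_norm_nonneg)
  finally show ?thesis using nu by simp
qed

subsection \<open>Eigenvalues of symmetric and positive definite matrices\<close>

lemma real_eigenvalues_finite:
  fixes M :: "real^'n^'n"
  assumes sym: "transpose M = M"
  shows "finite (real_eigenvalues M)"
proof -
  define E where "E = real_eigenvalues M"
  define ev where "ev l = (SOME v. v \<noteq> 0 \<and> M *v v = l *\<^sub>R v)" for l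
  have ev: "ev l \<noteq> 0 \<and> M *v ev l = l *\<^sub>R ev l" if "l \<in> E" for l
    using someI_ex[of "\<lambda>v. v \<noteq> 0 \<and> M *v v = l *\<^sub>R v"] that
    unfolding E_def real_eigenvalues_def ev_def by auto
  have orth: "ev l1 \<bullet> ev l2 = 0" if "l1 \<in> E" "l2 \<in> E" "l1 \<noteq> l2" for l1 l2
  proof -
    have "l1 * (ev l1 \<bullet> ev l2) = (M *v ev l1) \<bullet> ev l2" using ev[OF that(1)] by simp
    also have "\<dots> = ev l1 \<bullet> (M *v ev l2)" using inner_mv_transpose[of M] sym by simp
    also have "\<dots> = l2 * (ev l1 \<bullet> ev l2)" using ev[OF that(2)] by simp
    finally show ?thesis using that(3) by simp
  qed
  have "inj_on ev E"
  proof (rule inj_onI)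
    fix a b assume ab: "a \<in> E" "b \<in> E" "ev a = ev b"
    show "a = b"
    proof (rule ccontr)
      assume "a \<noteq> b"
      then have "ev b \<bullet> ev b = 0" using orth[OF ab(1,2)] ab(3) by simp
      then show False using ev[OF ab(2)] by simp
    qed
  qed
  moreover have "independent (ev ` E)"
    by (rule pairwise_orthogonal_independent) (use ev orth in \<open>auto simp: pairwise_def orthogonal_def\<close>)
  then have "finite (ev ` E)" using independent_bound by auto
  ultimately show ?thesis using finite_imageD unfolding E_def by blast
qed

lemma psd_quadratic_form_eq_0_imp_kernel:
  fixes N :: "real^'n^'n"
  assumes sym: "transpose N = N" and psd: "\<And>u. 0 \<le> u \<bullet> (N *v u)" and v: "v \<bullet> (N *v v) = 0"
  shows "N *v v = 0"
proof -
  define c where "c = N *v v"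
  define d where "d = c \<bullet> (N *v c)"
  have "0 \<le> d" using psd d_def by simp
  have quad: "0 \<le> 2 * t * (c \<bullet> c) + t\<^sup>2 * d" for t
  proof -
    have "0 \<le> (v + t *\<^sub>R c) \<bullet> (N *v (v + t *\<^sub>R c))" by (rule psd)
    also have "\<dots> = v \<bullet> (N *v v) + t * (v \<bullet> (N *v c)) + t * (c \<bullet> (N *v v)) + t\<^sup>2 * d"
      by (simp add: matrix_vector_right_distrib matrix_vector_mult_scaleR inner_add_left
          inner_add_right d_def power2_eq_square algebra_simps)
    also have "v \<bullet> (N *v c) = c \<bullet> c"
      using inner_mv_transpose[of N v c] sym c_def by (simp add: inner_commute)
    finally show ?thesis using v c_def by simp
  qed
  \<comment> \<open>the quadratic is negative at its (damped) minimiser unless \<open>c \<bullet> c = 0\<close>\<close>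
  define t where "t = - (c \<bullet> c) / (d + 1)"
  have cc: "c \<bullet> c = - t * (d + 1)" using \<open>0 \<le> d\<close> by (simp add: t_def)
  have "2 * t * (c \<bullet> c) + t\<^sup>2 * d = - t\<^sup>2 * (d + 2)"
    unfolding cc by (simp add: power2_eq_square algebra_simps)
  with quad[of t] have "t\<^sup>2 * (d + 2) \<le> 0" by linarith
  with \<open>0 \<le> d\<close> have "t = 0" by (simp add: mult_le_0_iff)
  with cc have "c \<bullet> c = 0" by simp
  then show ?thesis unfolding c_def by simp
qed

lemma real_eigenvalues_nonempty:
  fixes M :: "real^'n^'n"
  assumes sym: "transpose M = M"
  shows "real_eigenvalues M \<noteq> {}"
proof -
  \<comment> \<open>a minimiser of the Rayleigh quotient is an eigenvector\<close>
  define q where "q v = v \<bullet> (M *v v)" for v :: "real^'n"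
  have "continuous_on (sphere 0 1) q" unfolding q_def
    by (intro continuous_intros linear_continuous_on matrix_vector_mul_bounded_linear)
  moreover have "sphere (0::real^'n) 1 \<noteq> {}"
    by (metis mem_sphere_0 norm_axis_1 empty_iff)
  ultimately obtain v where v: "v \<in> sphere 0 1" and vmin: "\<And>u. u \<in> sphere 0 1 \<Longrightarrow> q v \<le> q u"
    using continuous_attains_inf[OF compact_sphere] by metis
  define N where "N = M - q v *\<^sub>R mat 1"
  have Nu: "N *v u = M *v u - q v *\<^sub>R u" for u
    unfolding N_def by (simp add: matrix_vector_mult_diff_rdistrib scaleR_matrix_vector_assoc[symmetric])
  have "transpose N = N" unfolding N_def using sym
    by (simp add: transpose_def vec_eq_iff mat_def)
  moreover have "0 \<le> u \<bullet> (N *v u)" for u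
  proof (cases "u = 0")
    case False
    have "q v \<le> q ((1 / norm u) *\<^sub>R u)" using False by (intro vmin) simp
    also have "\<dots> = (1 / norm u)\<^sup>2 * (u \<bullet> (M *v u))"
      unfolding q_def by (simp add: power2_eq_square matrix_vector_mult_scaleR)
    finally have "q v * (norm u)\<^sup>2 \<le> u \<bullet> (M *v u)"
      using False by (simp add: field_simps)
    then show ?thesis by (simp add: Nu inner_diff_right power2_norm_eq_inner)
  qed simp
  moreover have "v \<bullet> (N *v v) = 0"
    using v by (simp add: Nu inner_diff_right power2_norm_eq_inner[symmetric] q_def)
  ultimately have "N *v v = 0" by (rule psd_quadratic_form_eq_0_imp_kernel)
  then have "M *v v = q v *\<^sub>R v" using Nu by simp
  moreover have "v \<noteq> 0" using v by auto
  ultimately show ?thesis unfolding real_eigenvalues_def by blast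
qed

lemma pos_def_eigenvalue_pos:
  fixes M :: "real^'n^'n"
  assumes "pos_def M" and "l \<in> real_eigenvalues M"
  shows "0 < l"
proof -
  obtain v where v: "v \<noteq> 0" "M *v v = l *\<^sub>R v"
    using assms(2) unfolding real_eigenvalues_def by auto
  have "0 < v \<bullet> (M *v v)" using assms(1) v unfolding pos_def_def by auto
  then show ?thesis using v inner_ge_zero[of v] by (auto simp: zero_less_mult_iff)
qed

lemma pos_def_lam_pos:
  fixes M :: "real^'n^'n"
  assumes "pos_def M"
  shows "0 < lam_min M" "0 < lam_max M"
proof -
  have "transpose M = M" using assms unfolding pos_def_def by simp
  then have "finite (real_eigenvalues M)" "real_eigenvalues M \<noteq> {}"
    by (rule real_eigenvalues_finite, rule real_eigenvalues_nonempty)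
  then have "lam_min M \<in> real_eigenvalues M" "lam_max M \<in> real_eigenvalues M"
    unfolding lam_min_def lam_max_def by (rule Min_in, rule Max_in)
  then show "0 < lam_min M" "0 < lam_max M" using pos_def_eigenvalue_pos[OF assms] by blast+
qed

lemma pos_def_invertible:
  fixes C :: "real^'n^'n"
  assumes "pos_def C"
  shows "invertible C"
proof -
  have "\<forall>x. C *v x = 0 \<longrightarrow> x = 0" using assms unfolding pos_def_def by force
  then show ?thesis using matrix_left_invertible_ker invertible_left_inverse by blast
qed

lemma pos_def_matrix_inv:
  fixes C :: "real^'n^'n"
  assumes C: "pos_def C"
  shows "pos_def (matrix_inv C)"
proof -
  define Ci where "Ci = matrix_inv C"
  have CCi: "C ** Ci = mat 1" "Ci ** C = mat 1"
    using matrix_mul_matrix_inv[OF pos_def_invertible[OF C]] Ci_def by auto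
  have sym: "transpose C = C" using C unfolding pos_def_def by simp
  have "transpose Ci ** C = mat 1"
    using arg_cong[OF CCi(1), of transpose] sym by (simp add: matrix_transpose_mul)
  then have "transpose Ci = Ci"
    by (metis CCi(1) matrix_mul_assoc matrix_mul_lid matrix_mul_rid)
  moreover have "0 < v \<bullet> (Ci *v v)" if "v \<noteq> 0" for v
  proof -
    define w where "w = Ci *v v"
    have vw: "v = C *v w" unfolding w_def by (simp add: matrix_vector_mul_assoc CCi)
    then have "w \<noteq> 0" using that by auto
    have "v \<bullet> (Ci *v v) = w \<bullet> (C *v w)"
      unfolding w_def[symmetric] by (subst vw) (simp add: inner_commute)
    then show ?thesis using C \<open>w \<noteq> 0\<close> unfolding pos_def_def by simp
  qed
  ultimately show ?thesis unfolding pos_def_def Ci_def by blast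
qed

lemma pos_def_congruence:
  fixes A C :: "real^'n^'n"
  assumes C: "pos_def C" and A: "invertible A"
  shows "pos_def (transpose A ** C ** A)"
proof -
  have "transpose (transpose A ** C ** A) = transpose A ** C ** A"
    using C unfolding pos_def_def by (simp add: matrix_transpose_mul matrix_mul_assoc)
  moreover have "0 < v \<bullet> ((transpose A ** C ** A) *v v)" if "v \<noteq> 0" for v
  proof -
    have "A *v v \<noteq> 0"
      using that inj_matrix_vector_mult[OF A] by (metis injD matrix_vector_mult_0_right)
    then have "0 < (A *v v) \<bullet> (C *v (A *v v))" using C unfolding pos_def_def by blast
    then show ?thesis by (simp add: inner_mv_transpose matrix_vector_mul_assoc matrix_mul_assoc)
  qed
  ultimately show ?thesis unfolding pos_def_def by blast
qed

lemma diagonal_mat_mv: "diagonal_mat L \<Longrightarrow> (L *v x) $ i = L$i$i * x$i"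
  unfolding diagonal_mat_def matrix_vector_mult_def
  by (simp add: sum.remove[of UNIV i] sum.neutral)

lemma real_eigenvalues_diagonalizable:
  fixes Q P L :: "real^'k^'k"
  assumes QP: "Q ** P = mat 1" and GQ: "G = Q ** L ** P" and diag: "diagonal_mat L"
  shows "real_eigenvalues G = range (\<lambda>i. L$i$i)"
proof
  have PQ: "P ** Q = mat 1" using QP matrix_left_right_inverse by blast
  show "range (\<lambda>i. L$i$i) \<subseteq> real_eigenvalues G"
  proof clarify
    fix i
    define v where "v = Q *v axis i 1"
    have Pv: "P *v v = axis i 1" unfolding v_def by (simp add: matrix_vector_mul_assoc PQ)
    then have "v \<noteq> 0" by (auto simp: axis_eq_0_iff)
    have "L *v axis i 1 = L$i$i *\<^sub>R axis i 1"
      by (simp add: vec_eq_iff diagonal_mat_mv[OF diag] axis_def)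
    moreover have "G *v v = Q *v (L *v (P *v v))"
      unfolding GQ by (simp add: matrix_vector_mul_assoc matrix_mul_assoc)
    ultimately have "G *v v = L$i$i *\<^sub>R v"
      using Pv by (simp add: v_def matrix_vector_mult_scaleR)
    with \<open>v \<noteq> 0\<close> show "L$i$i \<in> real_eigenvalues G" unfolding real_eigenvalues_def by blast
  qed
  show "real_eigenvalues G \<subseteq> range (\<lambda>i. L$i$i)"
  proof
    fix l assume "l \<in> real_eigenvalues G"
    then obtain v where v0: "v \<noteq> 0" and ev: "G *v v = l *\<^sub>R v" unfolding real_eigenvalues_def by auto
    define w where "w = P *v v"
    have "Q *v w = v" unfolding w_def by (simp add: matrix_vector_mul_assoc QP)
    then have "w \<noteq> 0" using v0 by auto
    then obtain k where k: "w$k \<noteq> 0" by (auto simp: vec_eq_iff)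
    have "L *v w = P *v (G *v v)"
      unfolding w_def GQ by (simp add: matrix_vector_mul_assoc matrix_mul_assoc PQ)
    then have "L *v w = l *\<^sub>R w" unfolding ev w_def by (simp add: matrix_vector_mult_scaleR)
    then have "L$k$k * w$k = l * w$k" using diagonal_mat_mv[OF diag, of w k] by auto
    then have "l = L$k$k" using k by simp
    then show "l \<in> range (\<lambda>i. L$i$i)" by simp
  qed
qed

lemma sum_UNIV_plus:
  fixes f :: "('a::finite + 'b::finite) \<Rightarrow> 'c::comm_monoid_add"
  shows "(\<Sum>j\<in>UNIV. f j) = (\<Sum>a\<in>UNIV. f (Inl a)) + (\<Sum>b\<in>UNIV. f (Inr b))"
  by (subst UNIV_Plus_UNIV[symmetric], subst sum.Plus) (auto simp: comp_def)

lemma bvec_Inl [simp]: "bvec x y $ Inl a = x $ a"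
  and bvec_Inr [simp]: "bvec x y $ Inr a = y $ a"
  by (simp_all add: bvec_def)

lemma bvec_cases:
  obtains x y where "z = bvec x y"
proof
  show "z = bvec (\<chi> a. z $ Inl a) (\<chi> a. z $ Inr a)"
    by (simp add: vec_eq_iff bvec_def split: sum.split)
qed

lemma bvec_zero: "bvec 0 0 = 0"
  by (simp add: vec_eq_iff bvec_def split: sum.split)

lemma bvec_eq_iff: "bvec x y = bvec u v \<longleftrightarrow> x = u \<and> y = v"
  by (auto simp: vec_eq_iff bvec_def split: sum.split)

lemma scaleR_bvec: "c *\<^sub>R bvec x y = bvec (c *\<^sub>R x) (c *\<^sub>R y)"
  by (simp add: vec_eq_iff bvec_def split: sum.split)

lemma inner_bvec: "bvec x y \<bullet> bvec u v = x \<bullet> u + y \<bullet> v"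
  unfolding inner_vec_def by (subst sum_UNIV_plus) simp

lemma bmat_mv:
  "bmat \<beta> A C *v bvec x y =
     bvec (- (sqrt \<beta> *\<^sub>R (transpose A *v y))) (sqrt \<beta> *\<^sub>R (A *v x) + \<beta> *\<^sub>R (C *v y))"
proof -
  have "(bmat \<beta> A C *v bvec x y) $ i
      = bvec (- (sqrt \<beta> *\<^sub>R (transpose A *v y))) (sqrt \<beta> *\<^sub>R (A *v x) + \<beta> *\<^sub>R (C *v y)) $ i" for i
    unfolding matrix_vector_mult_def
    by (cases i) (simp_all add: sum_UNIV_plus bmat_def transpose_def sum_negf sum_distrib_left
        mult.assoc)
  then show ?thesis by (simp add: vec_eq_iff)
qed

lemma bmat_eigenvalue_pos:
  fixes A C :: "real^'d^'d"
  assumes \<beta>: "0 < \<beta>" and A: "invertible A" and C: "pos_def C"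
    and z: "z \<noteq> 0" and ev: "bmat \<beta> A C *v z = l *\<^sub>R z"
  shows "0 < l"
proof -
  obtain x y where zxy: "z = bvec x y" by (rule bvec_cases)
  have Gz: "bmat \<beta> A C *v z
      = bvec (- (sqrt \<beta> *\<^sub>R (transpose A *v y))) (sqrt \<beta> *\<^sub>R (A *v x) + \<beta> *\<^sub>R (C *v y))"
    unfolding zxy by (rule bmat_mv)
  then have lower: "sqrt \<beta> *\<^sub>R (A *v x) + \<beta> *\<^sub>R (C *v y) = l *\<^sub>R y"
    using ev unfolding zxy scaleR_bvec by (metis bvec_eq_iff)
  have "y \<noteq> 0"
  proof
    assume "y = 0"
    then have "A *v x = 0" using \<beta> lower by simp
    then have "x = 0" using inj_matrix_vector_mult[OF A] by (metis injD matrix_vector_mult_0_right)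
    then show False using z zxy \<open>y = 0\<close> by (simp add: bvec_zero)
  qed
  \<comment> \<open>the skew-symmetric off-diagonal blocks drop out of the quadratic form\<close>
  have "l * (z \<bullet> z) = z \<bullet> (bmat \<beta> A C *v z)" using ev by simp
  also have "\<dots> = \<beta> * (y \<bullet> (C *v y))"
    unfolding Gz using inner_mv_transpose[of A x y]
    by (subst zxy) (simp add: inner_bvec inner_add_right inner_commute)
  finally have "0 < l * (z \<bullet> z)" using \<beta> C \<open>y \<noteq> 0\<close> unfolding pos_def_def by simp
  then show ?thesis using inner_ge_zero[of z] by (auto simp: zero_less_mult_iff)
qed

lemma avg_component: "avg n f $ i = avg n (\<lambda>t. f t $ i)"
  unfolding avg_def by simp

lemma avg_scaleR: "avg n (\<lambda>t. c *\<^sub>R f t) = c *\<^sub>R avg n f"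
  unfolding avg_def by (simp add: scaleR_sum_right)

lemma avg_cmult: "avg n (\<lambda>t. c * (f t::real)) = c * avg n f"
  using avg_scaleR[of n c f] by simp

lemma avg_add: "avg n (\<lambda>t. f t + g t) = avg n f + avg n g"
  unfolding avg_def by (simp add: sum.distrib scaleR_add_right)

lemma avg_diff: "avg n (\<lambda>t. f t - g t) = avg n f - avg n g"
  unfolding avg_def by (simp add: sum_subtractf scaleR_diff_right)

lemma avg_const: "1 \<le> n \<Longrightarrow> avg n (\<lambda>t. c) = c"
  unfolding avg_def by (simp add: sum_constant_scaleR)

lemma avg_zero: "avg n (\<lambda>t. 0) = 0"
  unfolding avg_def by simp

lemma avg_mono: "(\<And>t. f t \<le> (g t::real)) \<Longrightarrow> avg n f \<le> avg n g"
  unfolding avg_def by (auto intro!: divide_right_mono sum_mono)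

lemma avg_nonneg: "(\<And>t. 0 \<le> (f t::real)) \<Longrightarrow> 0 \<le> avg n f"
  using avg_mono[of "\<lambda>_. 0" f n] by (simp add: avg_zero)

lemma avg_mv: "avg n f *v x = avg n (\<lambda>t. f t *v (x::real^'k))"
proof -
  have "(\<Sum>t\<in>S. f t) *v x = (\<Sum>t\<in>S. f t *v x)" for S
    by (simp add: matrix_vector_mult_def vec_eq_iff sum_distrib_right sum_component sum.swap[of _ S])
  then show ?thesis unfolding avg_def by (simp add: scaleR_matrix_vector_assoc[symmetric])
qed

lemma mv_avg: "M *v avg n f = avg n (\<lambda>t. M *v (f t::real^'k))"
  unfolding avg_def by (simp add: matrix_vector_mult_scaleR linear_sum[OF matrix_vector_mul_linear])

lemma avg_inner_left: "avg n (\<lambda>t. f t \<bullet> m) = avg n f \<bullet> (m::'a::real_inner)"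
  unfolding avg_def by (simp add: inner_sum_left)

lemma avg_bmat: "avg n (\<lambda>t. bmat \<beta> (A t) (C t)) = bmat \<beta> (avg n A) (avg n C)"
  by (simp add: vec_eq_iff avg_component bmat_def split: sum.split)
     (simp add: avg_def sum_distrib_left sum_negf)

lemma avg_bvec: "avg n (\<lambda>t. bvec (x t) (y t)) = bvec (avg n x) (avg n y)"
  by (simp add: vec_eq_iff avg_component bvec_def split: sum.split)

lemma invertible_avg_imp_pos:
  assumes "invertible (avg n (f :: nat \<Rightarrow> real^'d^'d))"
  shows "1 \<le> n"
  using assms not_invertible_zero unfolding avg_def by (cases n) auto

lemma avg_power2_norm:
  fixes a :: "nat \<Rightarrow> 'a::real_inner"
  assumes "1 \<le> n"
  shows "avg n (\<lambda>t. (norm (a t))\<^sup>2) = (norm (avg n a))\<^sup>2 + avg n (\<lambda>t. (norm (a t - avg n a))\<^sup>2)"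
proof -
  define m where "m = avg n a"
  have "(norm (a t))\<^sup>2 = (norm (a t - m))\<^sup>2 + 2 * ((a t - m) \<bullet> m) + (norm m)\<^sup>2" for t
    by (simp only: power2_norm_eq_inner) (simp add: inner_diff_left inner_diff_right inner_commute)
  then have "avg n (\<lambda>t. (norm (a t))\<^sup>2)
      = avg n (\<lambda>t. (norm (a t - m))\<^sup>2) + 2 * avg n (\<lambda>t. (a t - m) \<bullet> m) + (norm m)\<^sup>2"
    using assms by (simp add: avg_add avg_cmult avg_const)
  also have "avg n (\<lambda>t. (a t - m) \<bullet> m) = 0"
    using assms by (simp add: avg_inner_left avg_diff avg_const m_def)
  finally show ?thesis unfolding m_def by simp
qed

lemma avg_power2_norm_mv_le:
  fixes Gs :: "nat \<Rightarrow> real^'k^'k"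
  shows "avg n (\<lambda>t. (norm (Gs t *v u))\<^sup>2)
         \<le> spec_norm (avg n (\<lambda>t. transpose (Gs t) ** Gs t)) * (norm u)\<^sup>2"
proof -
  define H where "H = avg n (\<lambda>t. transpose (Gs t) ** Gs t)"
  have "(norm (Gs t *v u))\<^sup>2 = ((transpose (Gs t) ** Gs t) *v u) \<bullet> u" for t
    by (simp add: power2_norm_eq_inner inner_mv_transpose matrix_vector_mul_assoc inner_commute)
  then have "avg n (\<lambda>t. (norm (Gs t *v u))\<^sup>2) = (H *v u) \<bullet> u"
    unfolding H_def by (simp add: avg_inner_left avg_mv)
  also have "\<dots> \<le> norm (H *v u) * norm u" by (rule norm_cauchy_schwarz)
  also have "\<dots> \<le> spec_norm H * norm u * norm u" by (simp add: mult_right_mono norm_mv_le_spec_norm)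
  finally show ?thesis unfolding H_def by (simp add: power2_eq_square mult.assoc)
qed

lemma avg_power2_norm_centered_le:
  fixes Gs :: "nat \<Rightarrow> real^'k^'k"
  assumes "1 \<le> n"
    and second_moment: "\<And>u. avg n (\<lambda>t. (norm (Gs t *v u))\<^sup>2) \<le> L2 * (norm u)\<^sup>2"
  shows "avg n (\<lambda>t. (norm (M *v ((Gs t - avg n Gs) *v u)))\<^sup>2) \<le> (spec_norm M)\<^sup>2 * L2 * (norm u)\<^sup>2"
proof -
  have "avg n (\<lambda>t. (norm (M *v ((Gs t - avg n Gs) *v u)))\<^sup>2)
      \<le> avg n (\<lambda>t. (spec_norm M)\<^sup>2 * (norm (Gs t *v u - avg n (\<lambda>t. Gs t *v u)))\<^sup>2)"
    by (rule avg_mono) (simp add: power2_norm_mv_le matrix_vector_mult_diff_rdistrib avg_mv)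
  also have "\<dots> \<le> (spec_norm M)\<^sup>2 * avg n (\<lambda>t. (norm (Gs t *v u))\<^sup>2)"
    using avg_power2_norm[OF assms(1), of "\<lambda>t. Gs t *v u"] by (simp add: avg_cmult mult_left_mono)
  also have "\<dots> \<le> (spec_norm M)\<^sup>2 * (L2 * (norm u)\<^sup>2)" by (intro mult_left_mono second_moment) simp
  finally show ?thesis by (simp add: mult.assoc)
qed

lemma eigenvalue_power2_le_second_moment:
  fixes Gs :: "nat \<Rightarrow> real^'k^'k"
  assumes "1 \<le> n" and ev: "avg n Gs *v v = l *\<^sub>R v" and "v \<noteq> 0"
    and second_moment: "\<And>u. avg n (\<lambda>t. (norm (Gs t *v u))\<^sup>2) \<le> L2 * (norm u)\<^sup>2"
  shows "l\<^sup>2 \<le> L2"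
proof -
  have "0 \<le> avg n (\<lambda>t. (norm (Gs t *v v - avg n (\<lambda>t. Gs t *v v)))\<^sup>2)"
    by (rule avg_nonneg) simp
  then have "(norm (avg n (\<lambda>t. Gs t *v v)))\<^sup>2 \<le> avg n (\<lambda>t. (norm (Gs t *v v))\<^sup>2)"
    using avg_power2_norm[OF assms(1), of "\<lambda>t. Gs t *v v"] by linarith
  also have "\<dots> \<le> L2 * (norm v)\<^sup>2" by (rule second_moment)
  also have "avg n (\<lambda>t. Gs t *v v) = l *\<^sub>R v" using ev by (simp add: avg_mv)
  finally have "l\<^sup>2 * (norm v)\<^sup>2 \<le> L2 * (norm v)\<^sup>2" by (simp add: power_mult_distrib)
  then show ?thesis using \<open>v \<noteq> 0\<close> by simp
qed

lemma power2_norm_add_le: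
  fixes a b :: "'a::real_inner"
  assumes "0 < \<eta>"
  shows "(norm (a + b))\<^sup>2 \<le> (1 + \<eta>) * (norm a)\<^sup>2 + (1 + 1/\<eta>) * (norm b)\<^sup>2"
proof -
  have "0 \<le> (norm (\<eta> *\<^sub>R a - b))\<^sup>2" by simp
  also have "\<dots> = \<eta>\<^sup>2 * (norm a)\<^sup>2 - 2 * \<eta> * (a \<bullet> b) + (norm b)\<^sup>2"
    by (simp only: power2_norm_eq_inner)
       (simp add: inner_diff_left inner_diff_right inner_commute power2_eq_square algebra_simps)
  finally have "2 * (a \<bullet> b) \<le> \<eta> * (norm a)\<^sup>2 + (1/\<eta>) * (norm b)\<^sup>2"
    using assms by (simp add: field_simps power2_eq_square)
  moreover have "(norm (a + b))\<^sup>2 = (norm a)\<^sup>2 + 2 * (a \<bullet> b) + (norm b)\<^sup>2"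
    by (simp add: power2_norm_eq_inner inner_add_left inner_add_right inner_commute)
  ultimately show ?thesis by (simp add: algebra_simps)
qed

lemma power2_norm_diff_le: "(norm (x - y))\<^sup>2 \<le> 2 * (norm x)\<^sup>2 + 2 * (norm (y::'a::real_inner))\<^sup>2"
  using power2_norm_add_le[of 1 x "- y"] by simp

lemma power2_norm_diagonal_step_le:
  assumes "diagonal_mat L" "\<And>i. \<tau> \<le> \<sigma> * L$i$i" "\<And>i. \<sigma> * L$i$i \<le> 1"
  shows "(norm (x - \<sigma> *\<^sub>R (L *v x)))\<^sup>2 \<le> (1 - \<tau>)\<^sup>2 * (norm (x::real^'k))\<^sup>2"
proof -
  have norm_sq: "(norm v)\<^sup>2 = (\<Sum>i\<in>UNIV. (v$i)\<^sup>2)" for v :: "real^'k"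
    by (simp only: power2_norm_eq_inner) (simp add: inner_vec_def power2_eq_square)
  have "(norm (x - \<sigma> *\<^sub>R (L *v x)))\<^sup>2 = (\<Sum>i\<in>UNIV. ((1 - \<sigma> * L$i$i) * x$i)\<^sup>2)"
    unfolding norm_sq using diagonal_mat_mv[OF assms(1)] by (simp add: algebra_simps)
  also have "\<dots> \<le> (\<Sum>i\<in>UNIV. (1 - \<tau>)\<^sup>2 * (x$i)\<^sup>2)"
  proof (rule sum_mono)
    fix i
    have "(1 - \<sigma> * L$i$i)\<^sup>2 \<le> (1 - \<tau>)\<^sup>2" using assms(2,3)[of i] by (intro power_mono) auto
    then show "((1 - \<sigma> * L$i$i) * x$i)\<^sup>2 \<le> (1 - \<tau>)\<^sup>2 * (x$i)\<^sup>2"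
      by (simp add: power_mult_distrib mult_right_mono)
  qed
  also have "\<dots> = (1 - \<tau>)\<^sup>2 * (norm x)\<^sup>2" by (simp add: norm_sq sum_distrib_left)
  finally show ?thesis .
qed

subsection \<open>Expectations over finitely supported distributions\<close>

lemma expectation_bind_pmf_finite:
  fixes h :: "'b \<Rightarrow> real"
  assumes "finite (set_pmf p)" "\<And>x. x \<in> set_pmf p \<Longrightarrow> finite (set_pmf (q x))"
  shows "measure_pmf.expectation (bind_pmf p q) h
       = measure_pmf.expectation p (\<lambda>x. measure_pmf.expectation (q x) h)"
proof -
  have "measure_pmf.expectation (bind_pmf p q) h
      = (\<Sum>a\<in>set_pmf p. pmf p a *\<^sub>R measure_pmf.expectation (q a) h)"
    by (rule pmf_expectation_bind[OF assms order_refl])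
  also have "\<dots> = measure_pmf.expectation p (\<lambda>x. measure_pmf.expectation (q x) h)"
    by (rule integral_measure_pmf[symmetric]) (use assms in auto)
  finally show ?thesis .
qed

lemma expectation_mono_finite:
  fixes f g :: "'b \<Rightarrow> real"
  assumes "finite (set_pmf p)" "\<And>x. f x \<le> g x"
  shows "measure_pmf.expectation p f \<le> measure_pmf.expectation p g"
  by (rule integral_mono) (use assms in \<open>auto intro: integrable_measure_pmf_finite\<close>)

lemma expectation_linear_finite:
  fixes f g :: "'b \<Rightarrow> real"
  assumes "finite (set_pmf p)"
  shows "measure_pmf.expectation p (\<lambda>x. a * f x + b * g x)
       = a * measure_pmf.expectation p f + b * measure_pmf.expectation p g"
  using assms by (simp add: integrable_measure_pmf_finite)

lemma expectation_affine_finite: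
  fixes f :: "'b \<Rightarrow> real"
  assumes "finite (set_pmf p)"
  shows "measure_pmf.expectation p (\<lambda>x. a * f x + b) = a * measure_pmf.expectation p f + b"
  using expectation_linear_finite[OF assms, of a f b "\<lambda>_. 1"] by simp

lemma expectation_pmf_of_set_avg:
  "1 \<le> n \<Longrightarrow> measure_pmf.expectation (pmf_of_set {1..n}) (h :: nat \<Rightarrow> real) = avg n h"
  by (subst integral_pmf_of_set) (auto simp: avg_def)

lemma finite_set_pmf_inner_dist: "1 \<le> n \<Longrightarrow> finite (set_pmf (inner_dist Gs n \<sigma> Gm gm zm j))"
  by (induction j) (auto simp: set_pmf_of_set)

lemma finite_set_pmf_batch_pmf:
  assumes "b \<le> n"
  shows "finite (set_pmf (batch_pmf n b))"
proof -
  define X where "X = {S. S \<subseteq> {1..n} \<and> card S = b}"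
  have "finite X" unfolding X_def by (rule finite_subset[of _ "Pow {1..n}"]) auto
  moreover have "X \<noteq> {}" unfolding X_def using assms by (auto intro!: exI[of _ "{1..b}"])
  ultimately show ?thesis unfolding batch_pmf_def X_def[symmetric] by (simp add: set_pmf_of_set)
qed

lemma finite_set_pmf_epoch_dist:
  assumes "1 \<le> n" "\<forall>k. B k \<le> n"
  shows "finite (set_pmf (epoch_dist Gs gs n \<sigma> K B z0 m))"
  by (induction m) (use assms finite_set_pmf_batch_pmf finite_set_pmf_inner_dist in auto)

definition svrg_step :: "real \<Rightarrow> real^'k^'k \<Rightarrow> real^'k^'k \<Rightarrow> real^'k \<Rightarrow> real^'k \<Rightarrow> real^'k \<Rightarrow> real^'k"
  where "svrg_step \<sigma> Gi Gm gm zm w = w - \<sigma> *\<^sub>R (Gi *v w + (Gm - Gi) *v zm - gm)"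

lemma expectation_inner_dist_Suc:
  fixes f :: "real^'k \<Rightarrow> real"
  assumes "1 \<le> n"
  shows "measure_pmf.expectation (inner_dist Gs n \<sigma> Gm gm zm (Suc j)) f =
         measure_pmf.expectation (inner_dist Gs n \<sigma> Gm gm zm j)
           (\<lambda>w. avg n (\<lambda>t. f (svrg_step \<sigma> (Gs t) Gm gm zm w)))"
proof -
  have "measure_pmf.expectation (inner_dist Gs n \<sigma> Gm gm zm (Suc j)) f =
        measure_pmf.expectation (inner_dist Gs n \<sigma> Gm gm zm j) (\<lambda>w. measure_pmf.expectation
          (map_pmf (\<lambda>t. svrg_step \<sigma> (Gs t) Gm gm zm w) (pmf_of_set {1..n})) f)"
    unfolding inner_dist.simps svrg_step_def
    by (rule expectation_bind_pmf_finite)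
       (use assms in \<open>auto simp: finite_set_pmf_inner_dist set_pmf_of_set\<close>)
  also have "\<dots> = measure_pmf.expectation (inner_dist Gs n \<sigma> Gm gm zm j)
           (\<lambda>w. avg n (\<lambda>t. f (svrg_step \<sigma> (Gs t) Gm gm zm w)))"
    by (simp only: integral_map_pmf expectation_pmf_of_set_avg[OF assms])
  finally show ?thesis .
qed

lemma expectation_inner_dist_le:
  fixes f :: "real^'k \<Rightarrow> real"
  assumes n: "1 \<le> n"
    and step: "\<And>w. avg n (\<lambda>t. f (svrg_step \<sigma> (Gs t) Gm gm zm w)) \<le> \<rho> * f w + c"
    and "0 \<le> \<rho>" "\<rho> < 1" "0 \<le> c"
  shows "measure_pmf.expectation (inner_dist Gs n \<sigma> Gm gm zm j) f \<le> \<rho>^j * f zm + c / (1 - \<rho>)"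
proof (induction j)
  case 0
  then show ?case using assms by simp
next
  case (Suc j)
  have "measure_pmf.expectation (inner_dist Gs n \<sigma> Gm gm zm (Suc j)) f
        \<le> measure_pmf.expectation (inner_dist Gs n \<sigma> Gm gm zm j) (\<lambda>w. \<rho> * f w + c)"
    unfolding expectation_inner_dist_Suc[OF n]
    by (rule expectation_mono_finite[OF finite_set_pmf_inner_dist[OF n] step])
  also have "\<dots> = \<rho> * measure_pmf.expectation (inner_dist Gs n \<sigma> Gm gm zm j) f + c"
    by (rule expectation_affine_finite[OF finite_set_pmf_inner_dist[OF n]])
  also have "\<dots> \<le> \<rho> * (\<rho>^j * f zm + c / (1 - \<rho>)) + c"
    using Suc assms by (simp add: mult_left_mono)
  also have "\<dots> = \<rho>^Suc j * f zm + c / (1 - \<rho>)"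
    using assms by (simp add: field_simps)
  finally show ?case .
qed

lemma contraction_factor_bounds:
  fixes \<tau> :: real and K :: nat
  assumes "0 < \<tau>" "\<tau> \<le> 1/6" and K: "real K * \<tau> = 2"
  defines "\<rho> \<equiv> (1 + 3*\<tau>/4) * (1 - \<tau>)\<^sup>2 + \<tau>/3"
  shows "0 \<le> \<rho>" "11/12 * \<tau> \<le> 1 - \<rho>" "\<rho>^K \<le> 72/325"
proof -
  show \<rho>: "0 \<le> \<rho>" unfolding \<rho>_def using assms by (intro add_nonneg_nonneg mult_nonneg_nonneg) auto
  have "1 - \<rho> = 11/12 * \<tau> + \<tau> * (\<tau> * (1/2 - 3*\<tau>/4))"
    unfolding \<rho>_def by (simp add: power2_eq_square field_simps)
  moreover have "0 \<le> \<tau> * (\<tau> * (1/2 - 3*\<tau>/4))" using assms by simp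
  ultimately show gap: "11/12 * \<tau> \<le> 1 - \<rho>" by linarith
  \<comment> \<open>\<open>\<rho>^K \<le> exp (- K (1 - \<rho>)) \<le> exp (-11/6)\<close>, and \<open>exp (11/6) \<ge> 1 + 11/6 + (11/6)\<^sup>2/2 = 325/72\<close>\<close>
  have "(325::real)/72 = 1 + 11/6 + (11/6)\<^sup>2/2" by (simp add: power2_eq_square)
  also have "\<dots> \<le> exp (11/6)" by (rule exp_lower_Taylor_quadratic) simp
  also have "11/6 = real K * (11/12 * \<tau>)" using K by (simp add: algebra_simps)
  also have "\<dots> \<le> real K * (1 - \<rho>)" using gap by (intro mult_left_mono) auto
  finally have "325/72 \<le> exp (real K * (1 - \<rho>))" by simp
  then have "inverse (exp (real K * (1 - \<rho>))) \<le> inverse (325/72)"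
    by (intro le_imp_inverse_le) auto
  then have "exp (- (real K * (1 - \<rho>))) \<le> 72/325" by (simp add: exp_minus)
  moreover have "\<rho>^K \<le> exp (-(1 - \<rho>))^K"
    using exp_ge_add_one_self[of "-(1-\<rho>)"] \<rho> by (intro power_mono) simp_all
  ultimately show "\<rho>^K \<le> 72/325" by (simp add: exp_of_nat_mult[symmetric] algebra_simps)
qed

lemma inner_loop_constants:
  fixes \<tau> lam Y E :: real and K :: nat
  assumes \<tau>: "0 < \<tau>" "\<tau> \<le> 1/6" and K: "real K * \<tau> = 2" and lam: "0 < lam"
    and Y: "0 \<le> Y" and E: "0 \<le> E"
  defines "\<rho> \<equiv> (1 + 3*\<tau>/4) * (1 - \<tau>)\<^sup>2 + \<tau>/3" and "\<eta> \<equiv> 3*\<tau>/4"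
  shows "\<rho>^K * Y + ((\<tau>/3) * Y + (1 + 1/\<eta>) * (\<tau>/lam)\<^sup>2 * E) / (1 - \<rho>)
         \<le> 2/3 * Y + 2 * (1 - \<tau>) / lam\<^sup>2 * E"
proof -
  note \<rho> = contraction_factor_bounds[OF \<tau> K, folded \<rho>_def]
  define c where "c = (\<tau>/3) * Y + (1 + 1/\<eta>) * (\<tau>/lam)\<^sup>2 * E"
  have "0 \<le> c" unfolding c_def \<eta>_def using \<tau> Y E by simp
  have "\<rho>^K * Y \<le> 72/325 * Y" using \<rho>(3) Y by (rule mult_right_mono)
  moreover have "c / (1 - \<rho>) \<le> c / (11/12 * \<tau>)"
    using \<open>0 \<le> c\<close> \<rho>(2) \<tau> by (intro divide_left_mono) auto
  moreover have "c / (11/12 * \<tau>) = 4/11 * Y + 4 * (3 * \<tau> + 4) / 11 / lam\<^sup>2 * E"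
    unfolding c_def \<eta>_def using \<tau> lam by (simp add: field_simps power2_eq_square)
  moreover have "4 * (3 * \<tau> + 4) / 11 / lam\<^sup>2 \<le> 2 * (1 - \<tau>) / lam\<^sup>2"
    using \<tau> by (intro divide_right_mono) auto
  then have "4 * (3 * \<tau> + 4) / 11 / lam\<^sup>2 * E \<le> 2 * (1 - \<tau>) / lam\<^sup>2 * E"
    using E by (rule mult_right_mono)
  ultimately show ?thesis unfolding c_def[symmetric] using Y by linarith
qed

subsection \<open>One epoch of Batching SVRG\<close>

text \<open>
  P plays the role of Q^-1, L that of Lambda and L2 that of L_G^2; lam only needs to bound the
  eigenvalues of G from below.
\<close>

locale svrg_epoch =
  fixes n :: nat and Gs :: "nat \<Rightarrow> real^'k^'k" and g zs :: "real^'k"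
    and Q P L :: "real^'k^'k" and lam L2 \<sigma> :: real
  assumes n_pos: "1 \<le> n"
    and solution: "avg n Gs *v zs = g"
    and Q_P: "Q ** P = mat 1"
    and diagonalizes: "P ** avg n Gs = L ** P"
    and diagonal: "diagonal_mat L"
    and lam_le: "\<And>i. lam \<le> L$i$i"
    and lam_pos: "0 < lam"
    and second_moment: "\<And>u. avg n (\<lambda>t. (norm (Gs t *v u))\<^sup>2) \<le> L2 * (norm u)\<^sup>2"
    and step_size: "\<sigma> = lam / (6 * (spec_norm Q * spec_norm P)\<^sup>2 * L2)"
begin

abbreviation G :: "real^'k^'k" where "G \<equiv> avg n Gs"

abbreviation \<kappa> :: real where "\<kappa> \<equiv> spec_norm Q * spec_norm P"

lemma eigenvalue_power2_le: "(L$i$i)\<^sup>2 \<le> L2"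
proof -
  have "G = (Q ** P) ** G" by (simp add: Q_P)
  also have "\<dots> = Q ** L ** P" by (simp add: matrix_mul_assoc[symmetric] diagonalizes)
  finally have "L$i$i \<in> real_eigenvalues G"
    using real_eigenvalues_diagonalizable[OF Q_P _ diagonal] by blast
  then obtain v where "v \<noteq> 0" "G *v v = L$i$i *\<^sub>R v" unfolding real_eigenvalues_def by auto
  then show ?thesis by (intro eigenvalue_power2_le_second_moment[OF n_pos _ _ second_moment])
qed

lemma lam_mult_eigenvalue_le: "lam * L$i$i \<le> L2"
proof -
  have "lam * L$i$i \<le> L$i$i * L$i$i" using lam_le[of i] lam_pos by (intro mult_right_mono) auto
  then show ?thesis using eigenvalue_power2_le[of i] by (simp add: power2_eq_square)
qed

lemma L2_pos: "0 < L2"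
  using lam_mult_eigenvalue_le[of undefined] lam_le[of undefined] lam_pos
  by (smt (verit) mult_pos_pos)

lemma step_size_pos: "0 < \<sigma>"
  using L2_pos lam_pos spec_norm_mult_ge_one[OF Q_P] unfolding step_size
  by (intro divide_pos_pos mult_pos_pos) auto

lemma step_size_kappa: "\<sigma>\<^sup>2 * \<kappa>\<^sup>2 * L2 = \<sigma> * lam / 6"
  using L2_pos spec_norm_mult_ge_one[OF Q_P] unfolding step_size
  by (simp add: power2_eq_square field_simps)

lemma step_size_mult_le:
  assumes "lam * a \<le> L2"
  shows "\<sigma> * a \<le> 1/6"
proof -
  have "1 \<le> \<kappa>\<^sup>2" using spec_norm_mult_ge_one[OF Q_P] by (simp add: one_le_power)
  have "\<sigma> * a = lam * a / (6 * \<kappa>\<^sup>2 * L2)" unfolding step_size by simp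
  also have "\<dots> \<le> L2 / (6 * \<kappa>\<^sup>2 * L2)"
    using assms L2_pos \<open>1 \<le> \<kappa>\<^sup>2\<close> by (intro divide_right_mono) auto
  also have "\<dots> = 1 / (6 * \<kappa>\<^sup>2)" using L2_pos by simp
  also have "\<dots> \<le> 1/6" using \<open>1 \<le> \<kappa>\<^sup>2\<close> by (simp add: divide_le_eq_1 field_simps)
  finally show ?thesis .
qed

lemma step_size_eigenvalue_le: "\<sigma> * L$i$i \<le> 1"
  using step_size_mult_le[OF lam_mult_eigenvalue_le[of i]] by simp

lemma step_size_lam_le: "\<sigma> * lam \<le> 1/6"
  using step_size_mult_le lam_mult_eigenvalue_le[of undefined] lam_le[of undefined] lam_pos
  by (smt (verit) mult_left_mono)

lemma svrg_step_error:
  "P *v (svrg_step \<sigma> (Gs t) Gm gm zm w - zs)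
   = (P *v (w - zs) - \<sigma> *\<^sub>R (L *v (P *v (w - zs))) + \<sigma> *\<^sub>R (P *v ((G *v zm - g) - (Gm *v zm - gm))))
     - \<sigma> *\<^sub>R (P *v ((Gs t - G) *v (w - zm)))"
proof -
  have "Gs t *v w + (Gm - Gs t) *v zm - gm
      = (Gs t - G) *v (w - zm) + G *v (w - zs) - ((G *v zm - g) - (Gm *v zm - gm))"
    using solution
    by (simp add: algebra_simps matrix_vector_mult_diff_rdistrib matrix_vector_mult_diff_distrib)
  moreover have PG: "P *v (G *v u) = L *v (P *v u)" for u
    by (simp add: matrix_vector_mul_assoc diagonalizes)
  moreover have "P *v g = L *v (P *v zs)" using PG[of zs] solution by simp
  ultimately show ?thesis unfolding svrg_step_def
    by (simp add: matrix_vector_mult_diff_distrib matrix_vector_right_distrib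
        matrix_vector_mult_scaleR algebra_simps)
qed

lemma avg_deviation_zero: "avg n (\<lambda>t. P *v ((Gs t - G) *v u)) = 0"
  using n_pos by (simp add: mv_avg[symmetric] matrix_vector_mult_diff_rdistrib avg_diff avg_const
      avg_mv[symmetric])

lemma svrg_step_mean_le:
  assumes "0 < \<eta>"
  shows "(norm (x - \<sigma> *\<^sub>R (L *v x) + \<sigma> *\<^sub>R p))\<^sup>2
       \<le> (1 + \<eta>) * (1 - \<sigma> * lam)\<^sup>2 * (norm x)\<^sup>2 + (1 + 1/\<eta>) * \<sigma>\<^sup>2 * (norm p)\<^sup>2"
proof -
  have "(norm (x - \<sigma> *\<^sub>R (L *v x)))\<^sup>2 \<le> (1 - \<sigma> * lam)\<^sup>2 * (norm x)\<^sup>2"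
    using lam_le step_size_pos step_size_eigenvalue_le
    by (intro power2_norm_diagonal_step_le[OF diagonal]) (auto intro: mult_left_mono)
  then have "(1 + \<eta>) * (norm (x - \<sigma> *\<^sub>R (L *v x)))\<^sup>2 \<le> (1 + \<eta>) * (1 - \<sigma> * lam)\<^sup>2 * (norm x)\<^sup>2"
    using assms mult_left_mono by (simp add: mult.assoc)
  moreover have "(norm (x - \<sigma> *\<^sub>R (L *v x) + \<sigma> *\<^sub>R p))\<^sup>2
      \<le> (1 + \<eta>) * (norm (x - \<sigma> *\<^sub>R (L *v x)))\<^sup>2 + (1 + 1/\<eta>) * \<sigma>\<^sup>2 * (norm p)\<^sup>2"
    using power2_norm_add_le[OF assms, of "x - \<sigma> *\<^sub>R (L *v x)" "\<sigma> *\<^sub>R p"]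
    by (simp add: power_mult_distrib mult.assoc)
  ultimately show ?thesis by linarith
qed

lemma svrg_step_variance_le:
  "avg n (\<lambda>t. (norm (\<sigma> *\<^sub>R (P *v ((Gs t - G) *v (w - zm)))))\<^sup>2)
   \<le> \<sigma> * lam / 3 * (norm (P *v (w - zs)))\<^sup>2 + \<sigma> * lam / 3 * (norm (P *v (zm - zs)))\<^sup>2"
proof -
  define x where "x = P *v (w - zs)"
  define y where "y = P *v (zm - zs)"
  \<comment> \<open>this is where \<open>\<kappa>\<close> enters: the variance is measured in the original coordinates\<close>
  have "w - zm = Q *v (x - y)"
    unfolding x_def y_def by (simp add: matrix_vector_mult_diff_distrib matrix_vector_mul_assoc Q_P)
  have "avg n (\<lambda>t. (norm (\<sigma> *\<^sub>R (P *v ((Gs t - G) *v (w - zm)))))\<^sup>2)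
      = \<sigma>\<^sup>2 * avg n (\<lambda>t. (norm (P *v ((Gs t - G) *v (w - zm))))\<^sup>2)"
    by (simp add: power_mult_distrib avg_cmult)
  also have "\<dots> \<le> \<sigma>\<^sup>2 * ((spec_norm P)\<^sup>2 * L2 * (norm (w - zm))\<^sup>2)"
    by (intro mult_left_mono avg_power2_norm_centered_le[OF n_pos second_moment]) simp
  also have "\<dots> \<le> \<sigma>\<^sup>2 * ((spec_norm P)\<^sup>2 * L2 * ((spec_norm Q)\<^sup>2 * (norm (x - y))\<^sup>2))"
    unfolding \<open>w - zm = Q *v (x - y)\<close> using L2_pos
    by (intro mult_left_mono power2_norm_mv_le) simp_all
  also have "\<dots> = \<sigma> * lam / 6 * (norm (x - y))\<^sup>2"
    using step_size_kappa by (simp add: power_mult_distrib algebra_simps)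
  also have "\<dots> \<le> \<sigma> * lam / 6 * (2 * (norm x)\<^sup>2 + 2 * (norm y)\<^sup>2)"
    using step_size_pos lam_pos by (intro mult_left_mono power2_norm_diff_le) simp
  finally show ?thesis unfolding x_def y_def by (simp add: algebra_simps)
qed

lemma one_step_bound:
  assumes "0 < \<eta>"
  shows "avg n (\<lambda>t. (norm (P *v (svrg_step \<sigma> (Gs t) Gm gm zm w - zs)))\<^sup>2)
       \<le> ((1 + \<eta>) * (1 - \<sigma> * lam)\<^sup>2 + \<sigma> * lam / 3) * (norm (P *v (w - zs)))\<^sup>2
         + \<sigma> * lam / 3 * (norm (P *v (zm - zs)))\<^sup>2
         + (1 + 1/\<eta>) * \<sigma>\<^sup>2 * (norm (P *v ((G *v zm - g) - (Gm *v zm - gm))))\<^sup>2"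
proof -
  define x where "x = P *v (w - zs)"
  define p where "p = P *v ((G *v zm - g) - (Gm *v zm - gm))"
  define m where "m = x - \<sigma> *\<^sub>R (L *v x) + \<sigma> *\<^sub>R p"
  define d where "d t = \<sigma> *\<^sub>R (P *v ((Gs t - G) *v (w - zm)))" for t
  have "avg n d = 0" unfolding d_def by (simp add: avg_scaleR avg_deviation_zero)
  then have "avg n (\<lambda>t. m - d t) = m" using n_pos by (simp add: avg_diff avg_const)
  then have "avg n (\<lambda>t. (norm (P *v (svrg_step \<sigma> (Gs t) Gm gm zm w - zs)))\<^sup>2)
      = (norm m)\<^sup>2 + avg n (\<lambda>t. (norm (d t))\<^sup>2)"
    using avg_power2_norm[OF n_pos, of "\<lambda>t. m - d t"]
    unfolding svrg_step_error m_def d_def x_def p_def by simp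
  then show ?thesis
    using svrg_step_mean_le[OF assms, of x p] svrg_step_variance_le[of w zm]
    unfolding m_def d_def x_def p_def by (simp add: algebra_simps)
qed

lemma inner_loop_bound:
  assumes K: "real K = 2 / (\<sigma> * lam)"
  shows "measure_pmf.expectation (inner_dist Gs n \<sigma> Gm gm zm K) (\<lambda>z. (norm (P *v (z - zs)))\<^sup>2)
       \<le> 2/3 * (norm (P *v (zm - zs)))\<^sup>2
         + 2 * (1 - \<sigma> * lam) / lam\<^sup>2 * (norm (P *v ((G *v zm - g) - (Gm *v zm - gm))))\<^sup>2"
proof -
  define \<tau> where "\<tau> = \<sigma> * lam"
  have \<tau>: "0 < \<tau>" "\<tau> \<le> 1/6" using step_size_pos lam_pos step_size_lam_le \<tau>_def by auto
  have K\<tau>: "real K * \<tau> = 2" using K step_size_pos lam_pos \<tau>_def by simp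
  have \<sigma>: "\<sigma> = \<tau> / lam" using lam_pos \<tau>_def by simp
  define \<rho> where "\<rho> = (1 + 3*\<tau>/4) * (1 - \<tau>)\<^sup>2 + \<tau>/3"
  define \<eta> where "\<eta> = 3*\<tau>/4"
  define Y where "Y = (norm (P *v (zm - zs)))\<^sup>2"
  define E where "E = (norm (P *v ((G *v zm - g) - (Gm *v zm - gm))))\<^sup>2"
  define c where "c = (\<tau>/3) * Y + (1 + 1/\<eta>) * (\<tau>/lam)\<^sup>2 * E"
  note \<rho> = contraction_factor_bounds[OF \<tau> K\<tau>, folded \<rho>_def]
  have "0 < \<eta>" "0 \<le> c" using \<tau> unfolding \<eta>_def c_def Y_def E_def by simp_all
  have "avg n (\<lambda>t. (norm (P *v (svrg_step \<sigma> (Gs t) Gm gm zm w - zs)))\<^sup>2)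
      \<le> \<rho> * (norm (P *v (w - zs)))\<^sup>2 + c" for w
    using one_step_bound[OF \<open>0 < \<eta>\<close>, of Gm gm zm w]
    unfolding \<rho>_def c_def Y_def E_def \<eta>_def \<tau>_def[symmetric] \<sigma>[symmetric] by (simp add: algebra_simps)
  then have "measure_pmf.expectation (inner_dist Gs n \<sigma> Gm gm zm K) (\<lambda>z. (norm (P *v (z - zs)))\<^sup>2)
      \<le> \<rho>^K * Y + c / (1 - \<rho>)"
    unfolding Y_def using \<rho> \<tau> \<open>0 \<le> c\<close> by (intro expectation_inner_dist_le[OF n_pos]) auto
  also have "\<dots> \<le> 2/3 * Y + 2 * (1 - \<tau>) / lam\<^sup>2 * E"
    unfolding c_def \<rho>_def \<eta>_def Y_def E_def
    by (rule inner_loop_constants[OF \<tau> K\<tau> lam_pos]) simp_all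
  finally show ?thesis unfolding Y_def E_def \<tau>_def .
qed

lemma epoch_bound:
  assumes g: "g = avg n gs" and B: "\<forall>k. 1 \<le> B k \<and> B k \<le> n" and K: "real K = 2 / (\<sigma> * lam)"
  shows "measure_pmf.expectation (epoch_dist Gs gs n \<sigma> K B z0 (Suc m)) (\<lambda>z. (norm (P *v (z - zs)))\<^sup>2)
       \<le> 2/3 * measure_pmf.expectation (epoch_dist Gs gs n \<sigma> K B z0 m) (\<lambda>z. (norm (P *v (z - zs)))\<^sup>2)
         + 2 * (1 - \<sigma> * lam) / lam\<^sup>2 *
           measure_pmf.expectation (err_dist Gs gs n \<sigma> K B z0 m) (\<lambda>e. (norm (P *v e))\<^sup>2)"
proof -
  define Z where "Z = epoch_dist Gs gs n \<sigma> K B z0 m"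
  define batch where "batch = batch_pmf n (B m)"
  define inner where "inner z S = inner_dist Gs n \<sigma> (bavg S Gs) (bavg S gs) z K" for z S
  define f where "f z = (norm (P *v (z - zs)))\<^sup>2" for z
  define h where "h z S = (norm (P *v ((G *v z - g) - (bavg S Gs *v z - bavg S gs))))\<^sup>2" for z S
  define c where "c = 2 * (1 - \<sigma> * lam) / lam\<^sup>2"
  have fin_Z: "finite (set_pmf Z)"
    unfolding Z_def using B by (intro finite_set_pmf_epoch_dist n_pos) auto
  have fin_batch: "finite (set_pmf batch)"
    unfolding batch_def using B by (intro finite_set_pmf_batch_pmf) auto
  have fin_inner: "finite (set_pmf (inner z S))" for z S
    unfolding inner_def by (rule finite_set_pmf_inner_dist[OF n_pos])
  have "measure_pmf.expectation (epoch_dist Gs gs n \<sigma> K B z0 (Suc m)) f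
      = measure_pmf.expectation Z (\<lambda>z. measure_pmf.expectation batch
          (\<lambda>S. measure_pmf.expectation (inner z S) f))"
    unfolding epoch_dist.simps Z_def[symmetric] batch_def[symmetric] inner_def[symmetric]
    by (simp add: expectation_bind_pmf_finite fin_Z fin_batch fin_inner)
  also have "\<dots> \<le> measure_pmf.expectation Z (\<lambda>z. measure_pmf.expectation batch
          (\<lambda>S. 2/3 * f z + c * h z S))"
    unfolding inner_def f_def h_def c_def
    by (intro expectation_mono_finite[OF fin_Z] expectation_mono_finite[OF fin_batch]
        inner_loop_bound[OF K])
  also have "\<dots> = measure_pmf.expectation Z (\<lambda>z. 2/3 * f z + c * measure_pmf.expectation batch (h z))"
    using expectation_affine_finite[OF fin_batch, of c "h _" "2/3 * f _"] by (simp add: add.commute)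
  also have "\<dots> = 2/3 * measure_pmf.expectation Z f
      + c * measure_pmf.expectation Z (\<lambda>z. measure_pmf.expectation batch (h z))"
    by (rule expectation_linear_finite[OF fin_Z])
  also have "measure_pmf.expectation Z (\<lambda>z. measure_pmf.expectation batch (h z))
      = measure_pmf.expectation (err_dist Gs gs n \<sigma> K B z0 m) (\<lambda>e. (norm (P *v e))\<^sup>2)"
    unfolding err_dist_def Z_def[symmetric] batch_def[symmetric] h_def g
    by (simp add: expectation_bind_pmf_finite fin_Z fin_batch)
  finally show ?thesis unfolding Z_def f_def c_def .
qed

end

subsection \<open>The saddle-point operator of the empirical MSPBE problem\<close>

lemma Gbar_eq_bmat: "Gbar \<phi> s \<gamma> n = bmat (beta \<phi> s \<gamma> n) (Ahat \<phi> s \<gamma> n) (Chat \<phi> s n)"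
  unfolding Gbar_def Gt_def Ahat_def Chat_def by (rule avg_bmat)

lemma Gbar_zstar:
  assumes "invertible (Ahat \<phi> s \<gamma> n)"
  shows "Gbar \<phi> s \<gamma> n *v zstar \<phi> s r \<gamma> n = avg n (gt \<phi> s r \<gamma> n)"
proof -
  have "avg n (gt \<phi> s r \<gamma> n) = bvec 0 (sqrt (beta \<phi> s \<gamma> n) *\<^sub>R bhat \<phi> s r n)"
    unfolding gt_def bhat_def by (simp add: avg_bvec avg_zero avg_scaleR)
  moreover have "Ahat \<phi> s \<gamma> n *v (matrix_inv (Ahat \<phi> s \<gamma> n) *v bhat \<phi> s r n) = bhat \<phi> s r n"
    using matrix_mul_matrix_inv(1)[OF assms] by (simp add: matrix_vector_mul_assoc)
  ultimately show ?thesis unfolding Gbar_eq_bmat zstar_def by (simp add: bmat_mv)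
qed

lemma beta_pos:
  assumes "invertible (Ahat \<phi> s \<gamma> n)" and "pos_def (Chat \<phi> s n)"
  shows "0 < beta \<phi> s \<gamma> n"
  using pos_def_lam_pos[OF pos_def_congruence[OF pos_def_matrix_inv[OF assms(2)] assms(1)]]
    pos_def_lam_pos[OF assms(2)]
  unfolding beta_def by simp

lemma Gbar_eigenvalue_pos:
  assumes "invertible (Ahat \<phi> s \<gamma> n)" and "pos_def (Chat \<phi> s n)"
    and "l \<in> real_eigenvalues (Gbar \<phi> s \<gamma> n)"
  shows "0 < l"
proof -
  obtain v where "v \<noteq> 0" "Gbar \<phi> s \<gamma> n *v v = l *\<^sub>R v"
    using assms(3) unfolding real_eigenvalues_def by auto
  then show ?thesis
    unfolding Gbar_eq_bmat by (rule bmat_eigenvalue_pos[OF beta_pos[OF assms(1,2)] assms(1,2)])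
qed

theorem theorem1:
  fixes \<phi> :: "'s \<Rightarrow> real^'d" and s :: "nat \<Rightarrow> 's" and r :: "nat \<Rightarrow> real"
    and \<gamma> :: real and n :: nat
    and Q \<Lambda> :: "real^('d+'d)^('d+'d)"
    and B :: "nat \<Rightarrow> nat" and z0 :: "real^('d+'d)" and K m :: nat
  defines "\<sigma> \<equiv> sigma_theta \<phi> s \<gamma> n Q"
    and "lmin \<equiv> lminG \<phi> s \<gamma> n"
    and "Gs \<equiv> Gt \<phi> s \<gamma> n"
    and "gs \<equiv> gt \<phi> s r \<gamma> n"
    and "zs \<equiv> zstar \<phi> s r \<gamma> n"
  assumes "invertible (Ahat \<phi> s \<gamma> n)" and "pos_def (Chat \<phi> s n)"
    and "invertible Q" and "diagonal_mat \<Lambda>" and "Gbar \<phi> s \<gamma> n = Q ** \<Lambda> ** matrix_inv Q"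
    and "real K = 2 / (\<sigma> * lmin)"
    and "\<forall>k. 1 \<le> B k \<and> B k \<le> n"
  shows "measure_pmf.expectation (epoch_dist Gs gs n \<sigma> K B z0 (Suc m))
           (\<lambda>z. (norm (matrix_inv Q *v (z - zs)))\<^sup>2)
         \<le> 2/3 * measure_pmf.expectation (epoch_dist Gs gs n \<sigma> K B z0 m)
           (\<lambda>z. (norm (matrix_inv Q *v (z - zs)))\<^sup>2)
           + 2 * (1 - \<sigma> * lmin) / lmin\<^sup>2 *
             measure_pmf.expectation (err_dist Gs gs n \<sigma> K B z0 m)
               (\<lambda>e. (norm (matrix_inv Q *v e))\<^sup>2)"
proof -
  note A = assms(6) and C = assms(7) and Q = assms(8) and G = assms(10)
  have eigs: "real_eigenvalues (Gbar \<phi> s \<gamma> n) = range (\<lambda>i. \<Lambda>$i$i)"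
    by (rule real_eigenvalues_diagonalizable[OF matrix_mul_matrix_inv(1)[OF Q] G assms(9)])
  then have lmin: "lmin = Min (range (\<lambda>i. \<Lambda>$i$i))"
    unfolding assms(2) lminG_def lam_min_def by simp
  have "lmin \<in> real_eigenvalues (Gbar \<phi> s \<gamma> n)" unfolding lmin eigs by (intro Min_in) auto
  then have "0 < lmin" by (rule Gbar_eigenvalue_pos[OF A C])
  interpret svrg_epoch n Gs "avg n gs" zs Q "matrix_inv Q" \<Lambda> lmin "LG2 \<phi> s \<gamma> n" \<sigma>
  proof
    show "avg n Gs *v zs = avg n gs"
      using Gbar_zstar[OF A] unfolding assms(3-5) Gbar_def .
    show "matrix_inv Q ** avg n Gs = \<Lambda> ** matrix_inv Q"
      using G matrix_mul_matrix_inv(2)[OF Q] unfolding assms(3) Gbar_def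
      by (simp add: matrix_mul_assoc)
    show "avg n (\<lambda>t. (norm (Gs t *v u))\<^sup>2) \<le> LG2 \<phi> s \<gamma> n * (norm u)\<^sup>2" for u
      unfolding LG2_def assms(3) by (rule avg_power2_norm_mv_le)
    show "\<sigma> = lmin / (6 * (spec_norm Q * spec_norm (matrix_inv Q))\<^sup>2 * LG2 \<phi> s \<gamma> n)"
      unfolding assms(1,2) sigma_theta_def kappa_def ..
  qed (use A \<open>0 < lmin\<close> assms(9) invertible_avg_imp_pos[of n "At \<phi> s \<gamma>"]
      matrix_mul_matrix_inv[OF Q] in \<open>auto simp: lmin Ahat_def\<close>)
  show ?thesis by (rule epoch_bound[OF refl assms(12,11)])
qed

end
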